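(* For every integer $r\ge 4$ there exists an infinite family of connected $r$-regular graphs $G$, each containing a pair of closed twins, such that $\gamma^{LD}(G)>\frac{n(G)}{2}$.
   Context: All graphs are finite and simple; $n(G)$ is the number of vertices. A graph is $r$-regular if every vertex has degree $r$. Two distinct vertices $u,v$ are closed twins if $N[u]=N[v]$. For $S\subseteq V(G)$, $I(v)=N[v]\cap S$. A set $S$ is locating-dominating if every vertex $v$ has $I(v)\ne\emptyset$ and $I(u)\neq I(v)$ for all distinct $u,v\in V(G)\setminus S$. $\gamma^{LD}(G)$ denotes the minimum size of a locating-dominating set of $G$. *)

theory Defs
  imports Complex_Main
begin

definition simple_graph :: "nat set \<Rightarrow> (nat \<Rightarrow> nat \<Rightarrow> bool) \<Rightarrow> bool" where
  "simple_graph V E \<longleftrightarrow> finite V \<and>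
     (\<forall>u v. E u v \<longrightarrow> u \<in> V \<and> v \<in> V \<and> u \<noteq> v) \<and>
     (\<forall>u v. E u v \<longrightarrow> E v u)"

definition open_nbhd :: "(nat \<Rightarrow> nat \<Rightarrow> bool) \<Rightarrow> nat \<Rightarrow> nat set" where
  "open_nbhd E v = {u. E v u}"

definition closed_nbhd :: "(nat \<Rightarrow> nat \<Rightarrow> bool) \<Rightarrow> nat \<Rightarrow> nat set" where
  "closed_nbhd E v = insert v (open_nbhd E v)"

definition regular :: "nat set \<Rightarrow> (nat \<Rightarrow> nat \<Rightarrow> bool) \<Rightarrow> nat \<Rightarrow> bool" where
  "regular V E r \<longleftrightarrow> (\<forall>v\<in>V. card (open_nbhd E v) = r)"

definition connected_graph :: "nat set \<Rightarrow> (nat \<Rightarrow> nat \<Rightarrow> bool) \<Rightarrow> bool" where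
  "connected_graph V E \<longleftrightarrow> (\<forall>u\<in>V. \<forall>v\<in>V. (u, v) \<in> {(x, y). E x y}\<^sup>*)"

definition closed_twins :: "(nat \<Rightarrow> nat \<Rightarrow> bool) \<Rightarrow> nat \<Rightarrow> nat \<Rightarrow> bool" where
  "closed_twins E u v \<longleftrightarrow> u \<noteq> v \<and> closed_nbhd E u = closed_nbhd E v"

definition has_closed_twins :: "nat set \<Rightarrow> (nat \<Rightarrow> nat \<Rightarrow> bool) \<Rightarrow> bool" where
  "has_closed_twins V E \<longleftrightarrow> (\<exists>u\<in>V. \<exists>v\<in>V. closed_twins E u v)"

definition locating_dominating ::
    "nat set \<Rightarrow> (nat \<Rightarrow> nat \<Rightarrow> bool) \<Rightarrow> nat set \<Rightarrow> bool" where
  "locating_dominating V E S \<longleftrightarrow> S \<subseteq> V \<and>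
     (\<forall>v\<in>V. closed_nbhd E v \<inter> S \<noteq> {}) \<and>
     (\<forall>u\<in>V - S. \<forall>v\<in>V - S. u \<noteq> v \<longrightarrow> closed_nbhd E u \<inter> S \<noteq> closed_nbhd E v \<inter> S)"

definition gamma_LD :: "nat set \<Rightarrow> (nat \<Rightarrow> nat \<Rightarrow> bool) \<Rightarrow> nat" where
  "gamma_LD V E = Min {card S | S. locating_dominating V E S}"

end

theory Submission
  imports Defs
begin

text \<open>Take m blocks of R = r + 1 vertices each. Every block is a clique with the edge between
  its head and its tail removed, and the tail of each block is joined to the head of the next one,
  cyclically; the resulting graph is connected and r-regular. The R - 2 inner vertices of a block
  are pairwise closed twins, so a locating-dominating set S misses at most one of them. Call a
  block deficient if S misses its head, its tail and an inner vertex. Then S contains the head of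
  the next block and the tail of the previous one, since otherwise the tail (resp. the head) of
  the deficient block would have the same trace on S as the missed inner vertex. With d deficient
  blocks this gives |S| \<ge> m(R - 2) - d and |S| \<ge> m(R - 3) + 2d, so 3|S| \<ge> m(3R - 7), which
  exceeds 3mR/2 as soon as R \<ge> 5.\<close>

lemma locating_dominating_self: "locating_dominating V E V"
  unfolding locating_dominating_def closed_nbhd_def by auto

lemma gamma_LD_attained:
  assumes "finite V"
  obtains S where "locating_dominating V E S" "gamma_LD V E = card S"
proof -
  let ?C = "{card S | S. locating_dominating V E S}"
  have "?C \<subseteq> {..card V}"
    using card_mono[OF assms] by (auto simp: locating_dominating_def)
  then have "finite ?C" by (rule finite_subset) simp
  moreover have "?C \<noteq> {}" using locating_dominating_self by blast
  ultimately have "gamma_LD V E \<in> ?C" unfolding gamma_LD_def by (rule Min_in)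
  with that show thesis by blast
qed

lemma locating_dominating_separates:
  assumes "locating_dominating V E S" "u \<in> V" "v \<in> V" "u \<noteq> v" "u \<notin> S"
    and "closed_nbhd E u \<inter> S = closed_nbhd E v \<inter> S"
  shows "v \<in> S"
  using assms unfolding locating_dominating_def by blast

lemma connected_graph_if_reachable_from:
  assumes "\<And>u v. E u v \<Longrightarrow> E v u" and "\<And>v. v \<in> V \<Longrightarrow> (w, v) \<in> {(x, y). E x y}\<^sup>*"
  shows "connected_graph V E"
proof -
  let ?E = "{(x, y). E x y}"
  have "?E\<inverse> = ?E" using assms(1) by auto
  then have "(u, w) \<in> ?E\<^sup>*" if "u \<in> V" for u
    using rtrancl_converseI[OF assms(2)[OF that]] by simp
  then show ?thesis
    unfolding connected_graph_def using assms(2) by (blast intro: rtrancl_trans)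
qed

definition next_block :: "nat \<Rightarrow> nat \<Rightarrow> nat" where
  "next_block m i = (if Suc i = m then 0 else Suc i)"

definition prev_block :: "nat \<Rightarrow> nat \<Rightarrow> nat" where
  "prev_block m i = (if i = 0 then m - 1 else i - 1)"

lemma next_block_lt: "i < m \<Longrightarrow> next_block m i < m"
  unfolding next_block_def by auto

lemma prev_block_lt: "i < m \<Longrightarrow> prev_block m i < m"
  unfolding prev_block_def by auto

lemma next_prev_block: "i < m \<Longrightarrow> next_block m (prev_block m i) = i"
  unfolding next_block_def prev_block_def by auto

lemma prev_next_block: "i < m \<Longrightarrow> prev_block m (next_block m i) = i"
  unfolding next_block_def prev_block_def by auto

lemma next_block_Suc: "Suc i < m \<Longrightarrow> next_block m i = Suc i"
  by (simp add: next_block_def)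

lemma bij_betw_next_block: "bij_betw (next_block m) {..<m} {..<m}"
  by (rule bij_betw_byWitness[where f' = "prev_block m"])
    (auto simp: next_prev_block prev_next_block next_block_lt prev_block_lt)

lemma bij_betw_prev_block: "bij_betw (prev_block m) {..<m} {..<m}"
  by (rule bij_betw_byWitness[where f' = "next_block m"])
    (auto simp: next_prev_block prev_next_block next_block_lt prev_block_lt)

definition block :: "nat \<Rightarrow> nat \<Rightarrow> nat set" where
  "block R i = {i * R..<i * R + R}"

definition inner :: "nat \<Rightarrow> nat \<Rightarrow> nat set" where
  "inner R i = {i * R + 2..<i * R + R}"

lemma mem_block_iff: "0 < R \<Longrightarrow> v \<in> block R i \<longleftrightarrow> v div R = i"
  unfolding block_def
  by (metis atLeastLessThan_iff add.commute div_nat_eqI div_times_less_eq_dividend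
      dividend_less_div_times mult.commute mult_Suc)

lemma finite_block [simp]: "finite (block R i)"
  by (simp add: block_def)

lemma mem_inner_iff:
  assumes "0 < R" shows "v \<in> inner R i \<longleftrightarrow> v div R = i \<and> 2 \<le> v mod R"
proof -
  have "v \<in> inner R i \<longleftrightarrow> v \<in> block R i \<and> i * R + 2 \<le> v"
    by (auto simp: inner_def block_def)
  moreover have "i * R + 2 \<le> v \<longleftrightarrow> 2 \<le> v mod R" if "v div R = i"
    using div_mult_mod_eq[of v R] unfolding that by linarith
  ultimately show ?thesis using mem_block_iff[OF assms] by blast
qed

lemma card_eq_sum_blocks:
  assumes "0 < R" "S \<subseteq> {..<m * R}"
  shows "card S = (\<Sum>i<m. card (S \<inter> block R i))"
proof -
  have "S = (\<Union>i<m. S \<inter> block R i)"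
    using assms by (auto simp: mem_block_iff div_less_iff_less_mult)
  also have "card \<dots> = (\<Sum>i<m. card (S \<inter> block R i))"
    by (rule card_UN_disjoint) (auto simp: mem_block_iff[OF assms(1)])
  finally show ?thesis .
qed

lemma block_eq_insert_inner:
  "2 \<le> R \<Longrightarrow> block R i = insert (i * R) (insert (i * R + 1) (inner R i))"
  by (auto simp: block_def inner_def)

lemma card_block_Int:
  assumes "2 \<le> R"
  shows "card (S \<inter> block R i) =
    card (S \<inter> inner R i) + of_bool (i * R \<in> S) + of_bool (i * R + 1 \<in> S)"
  by (auto simp: block_eq_insert_inner[OF assms] inner_def)

lemma card_insert_insert_inner:
  assumes "2 \<le> R" "a mod R \<le> 1" "b mod R \<le> 1" "a mod R \<noteq> b mod R"
  shows "card (insert a (insert b (inner R i))) = R"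
proof -
  have "a \<notin> inner R i" "b \<notin> inner R i" "a \<noteq> b"
    using assms by (auto simp: mem_inner_iff)
  then show ?thesis using assms(1) by (simp add: inner_def)
qed

lemma inner_subset_block: "inner R i \<subseteq> block R i"
  by (auto simp: inner_def block_def)

text \<open>Vertex i * R + j (j < R) is vertex j of block i; i * R is the head and i * R + 1 the tail
  of block i.\<close>
definition clique_ring :: "nat \<Rightarrow> nat \<Rightarrow> nat \<Rightarrow> nat \<Rightarrow> bool" where
  "clique_ring m R u v \<longleftrightarrow> u < m * R \<and> v < m * R \<and> u \<noteq> v \<and>
     ((u div R = v div R \<and> \<not> (u mod R \<le> 1 \<and> v mod R \<le> 1)) \<or>
      (u mod R = 1 \<and> v mod R = 0 \<and> v div R = next_block m (u div R)) \<or>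
      (v mod R = 1 \<and> u mod R = 0 \<and> u div R = next_block m (v div R)))"

locale clique_ring_graph =
  fixes m R :: nat
  assumes m_pos: "0 < m" and three_le_R: "3 \<le> R"
begin

abbreviation E :: "nat \<Rightarrow> nat \<Rightarrow> bool" where
  "E \<equiv> clique_ring m R"

lemma R_pos: "0 < R"
  using three_le_R by simp

lemma vertex_lt_iff: "v < m * R \<longleftrightarrow> v div R < m"
  by (simp add: R_pos div_less_iff_less_mult)

lemma div_mod_vertex [simp]:
  "j < R \<Longrightarrow> (i * R + j) div R = i" "j < R \<Longrightarrow> (i * R + j) mod R = j"
  by simp_all

lemma div_mod_head [simp]: "i * R div R = i" "i * R mod R = 0"
  using R_pos by simp_all

lemma div_mod_tail [simp]: "Suc (i * R) div R = i" "Suc (i * R) mod R = 1"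
  using div_mod_vertex[of 1 i] three_le_R by simp_all

lemma adjacent_inner_iff:
  assumes "i < m" "u \<in> inner R i"
  shows "E u v \<longleftrightarrow> v \<in> block R i \<and> v \<noteq> u"
  using assms
  by (auto simp: clique_ring_def mem_block_iff[OF R_pos] mem_inner_iff[OF R_pos] vertex_lt_iff)

lemma adjacent_head_iff:
  assumes "i < m"
  shows "E (i * R) v \<longleftrightarrow> v \<in> inner R i \<or> v = prev_block m i * R + 1"
proof
  assume "E (i * R) v"
  then consider "v \<in> inner R i" | "v mod R = 1" "i = next_block m (v div R)" "v div R < m"
    by (auto simp: clique_ring_def vertex_lt_iff mem_inner_iff[OF R_pos])
  then show "v \<in> inner R i \<or> v = prev_block m i * R + 1"
  proof cases
    case 2
    then have "v div R = prev_block m i" by (simp add: prev_next_block)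
    with 2 show ?thesis using div_mult_mod_eq[of v R] by simp
  qed simp
next
  assume "v \<in> inner R i \<or> v = prev_block m i * R + 1"
  then show "E (i * R) v"
    using assms prev_block_lt[OF assms] next_prev_block[OF assms]
    by (auto simp: clique_ring_def vertex_lt_iff mem_inner_iff[OF R_pos]
        dest: arg_cong[where f = "\<lambda>x. x mod R"])
qed

lemma adjacent_tail_iff:
  assumes "i < m"
  shows "E (i * R + 1) v \<longleftrightarrow> v \<in> inner R i \<or> v = next_block m i * R"
proof
  assume "E (i * R + 1) v"
  then consider "v \<in> inner R i" | "v mod R = 0" "v div R = next_block m i"
    by (auto simp: clique_ring_def vertex_lt_iff mem_inner_iff[OF R_pos])
  then show "v \<in> inner R i \<or> v = next_block m i * R"
  proof cases
    case 2
    then show ?thesis using div_mult_mod_eq[of v R] by simp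
  qed simp
next
  assume "v \<in> inner R i \<or> v = next_block m i * R"
  then show "E (i * R + 1) v"
    using assms next_block_lt[OF assms]
    by (auto simp: clique_ring_def vertex_lt_iff mem_inner_iff[OF R_pos]
        dest: arg_cong[where f = "\<lambda>x. x mod R"])
qed

lemma vertex_cases:
  assumes "v < m * R"
  obtains (inner) i where "v \<in> inner R i" "i < m"
    | (head) i where "v = i * R" "i < m"
    | (tail) i where "v = i * R + 1" "i < m"
proof -
  have v: "v = v div R * R + v mod R" "v div R < m" "v mod R < R"
    using assms R_pos by (simp_all add: vertex_lt_iff)
  consider "2 \<le> v mod R" | "v mod R = 0" | "v mod R = 1" by linarith
  then show thesis
    by cases (use v that in \<open>metis add.right_neutral mem_inner_iff[OF R_pos]\<close>)+
qed

lemma closed_nbhd_inner: "i < m \<Longrightarrow> v \<in> inner R i \<Longrightarrow> closed_nbhd E v = block R i"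
  using inner_subset_block by (auto simp: closed_nbhd_def open_nbhd_def adjacent_inner_iff)

lemma closed_nbhd_head:
  "i < m \<Longrightarrow> closed_nbhd E (i * R) = insert (i * R) (insert (prev_block m i * R + 1) (inner R i))"
  by (auto simp: closed_nbhd_def open_nbhd_def adjacent_head_iff)

lemma closed_nbhd_tail:
  "i < m \<Longrightarrow> closed_nbhd E (i * R + 1) = insert (i * R + 1) (insert (next_block m i * R) (inner R i))"
  using adjacent_tail_iff[of i] by (auto simp: closed_nbhd_def open_nbhd_def)

lemma card_closed_nbhd:
  assumes "v < m * R" shows "card (closed_nbhd E v) = R"
  using assms
proof (cases rule: vertex_cases)
  case (inner i)
  then show ?thesis by (simp add: closed_nbhd_inner block_def)
next
  case (head i)
  then show ?thesis using three_le_R by (simp add: closed_nbhd_head card_insert_insert_inner)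
next
  case (tail i)
  then show ?thesis
    using three_le_R by (simp only: closed_nbhd_tail) (simp add: card_insert_insert_inner)
qed

lemma card_open_nbhd:
  assumes "v < m * R" shows "card (open_nbhd E v) = R - 1"
proof -
  have "open_nbhd E v = closed_nbhd E v - {v}"
    by (auto simp: closed_nbhd_def open_nbhd_def clique_ring_def)
  moreover have "finite (closed_nbhd E v)"
    using card_closed_nbhd[OF assms] R_pos by (intro card_ge_0_finite) simp
  moreover have "v \<in> closed_nbhd E v" by (simp add: closed_nbhd_def)
  ultimately show ?thesis by (simp add: card_closed_nbhd[OF assms])
qed

lemma simple_graph_clique_ring: "simple_graph {..<m * R} E"
  by (auto simp: simple_graph_def clique_ring_def)

lemma regular_clique_ring: "regular {..<m * R} E (R - 1)"
  by (simp add: regular_def card_open_nbhd)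

lemma has_closed_twins_clique_ring:
  assumes "4 \<le> R" shows "has_closed_twins {..<m * R} E"
proof -
  have "1 * 4 \<le> m * R" using assms m_pos by (intro mult_le_mono) auto
  moreover have "closed_nbhd E 2 = closed_nbhd E 3"
    using closed_nbhd_inner[of 0 2] closed_nbhd_inner[of 0 3] m_pos assms
    by (simp add: inner_def)
  ultimately show ?thesis
    unfolding has_closed_twins_def closed_twins_def by (intro bexI[of _ 2] bexI[of _ 3]) auto
qed

lemma add_two_in_inner: "i * R + 2 \<in> inner R i"
  using three_le_R by (simp add: inner_def)

lemma reachable_head_from_0: "i < m \<Longrightarrow> (0, i * R) \<in> {(x, y). E x y}\<^sup>*"
proof (induction i)
  case (Suc i)
  have "E (i * R) (i * R + 2)"
    using Suc add_two_in_inner by (simp add: adjacent_head_iff)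
  moreover have "E (i * R + 2) (i * R + 1)"
    using Suc three_le_R by (subst adjacent_inner_iff[OF _ add_two_in_inner]) (auto simp: block_def)
  moreover have "E (i * R + 1) (Suc i * R)"
    using Suc by (subst adjacent_tail_iff) (simp_all add: next_block_Suc)
  moreover have "(0, i * R) \<in> {(x, y). E x y}\<^sup>*"
    using Suc by simp
  ultimately show ?case
    by (blast intro: rtrancl.rtrancl_into_rtrancl)
qed simp

lemma reachable_from_0:
  assumes "v < m * R" shows "(0, v) \<in> {(x, y). E x y}\<^sup>*"
  using assms
proof (cases rule: vertex_cases)
  case (inner i)
  then have "E (i * R) v" by (simp add: adjacent_head_iff)
  with reachable_head_from_0[OF inner(2)] show ?thesis
    by (simp add: rtrancl.rtrancl_into_rtrancl)
next
  case (tail i)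
  have "E (i * R) (i * R + 2)"
    using tail add_two_in_inner by (simp add: adjacent_head_iff)
  moreover have "E (i * R + 2) v"
    using tail three_le_R
    by (subst adjacent_inner_iff[OF _ add_two_in_inner]) (auto simp: block_def)
  ultimately show ?thesis
    using reachable_head_from_0[OF tail(2)] by (auto intro: rtrancl.rtrancl_into_rtrancl)
qed (simp add: reachable_head_from_0)

lemma clique_ring_sym: "E u v \<Longrightarrow> E v u"
  by (auto simp: clique_ring_def)

lemma connected_clique_ring: "connected_graph {..<m * R} E"
  by (rule connected_graph_if_reachable_from[where w = 0])
    (simp_all add: clique_ring_sym reachable_from_0)

lemma block_subset_vertices: "i < m \<Longrightarrow> block R i \<subseteq> {..<m * R}"
  by (auto simp: mem_block_iff[OF R_pos] vertex_lt_iff)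

lemma card_inner_Diff_le_one:
  assumes LD: "locating_dominating {..<m * R} E S" and i: "i < m"
  shows "card (inner R i - S) \<le> 1"
proof -
  have "u = v" if "u \<in> inner R i - S" "v \<in> inner R i - S" for u v
  proof (rule ccontr)
    assume "u \<noteq> v"
    moreover have "u \<in> {..<m * R}" "v \<in> {..<m * R}"
      using that block_subset_vertices[OF i] inner_subset_block by blast+
    ultimately have "v \<in> S"
      using that i by (intro locating_dominating_separates[OF LD]) (auto simp: closed_nbhd_inner)
    with that show False by blast
  qed
  then show ?thesis by (simp add: card_le_Suc0_iff_eq inner_def)
qed

lemma card_Int_inner_ge:
  assumes "locating_dominating {..<m * R} E S" "i < m"
  shows "R - 3 \<le> card (S \<inter> inner R i)"
proof -
  have "card (inner R i) = card (S \<inter> inner R i) + card (inner R i - S)"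
    by (metis Int_commute card_Int_Diff finite_atLeastLessThan inner_def)
  then show ?thesis
    using card_inner_Diff_le_one[OF assms] by (simp add: inner_def)
qed

lemma next_head_in_locating_dominating:
  assumes LD: "locating_dominating {..<m * R} E S" and i: "i < m"
    and "i * R \<notin> S" "i * R + 1 \<notin> S" "\<not> inner R i \<subseteq> S"
  shows "next_block m i * R \<in> S"
proof (rule ccontr)
  assume "next_block m i * R \<notin> S"
  obtain x where x: "x \<in> inner R i" "x \<notin> S" using assms(5) by blast
  have "closed_nbhd E (i * R + 1) \<inter> S = closed_nbhd E x \<inter> S"
    using assms \<open>next_block m i * R \<notin> S\<close> x three_le_R closed_nbhd_tail[OF i]
    by (auto simp: closed_nbhd_inner block_eq_insert_inner)
  moreover have "i * R + 1 \<in> {..<m * R}" "x \<in> {..<m * R}" "i * R + 1 \<noteq> x"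
    using block_subset_vertices[OF i] inner_subset_block x three_le_R
    by (auto simp: block_eq_insert_inner inner_def)
  ultimately have "x \<in> S"
    using assms(4) by (intro locating_dominating_separates[OF LD])
  with x show False by blast
qed

lemma prev_tail_in_locating_dominating:
  assumes LD: "locating_dominating {..<m * R} E S" and i: "i < m"
    and "i * R \<notin> S" "i * R + 1 \<notin> S" "\<not> inner R i \<subseteq> S"
  shows "prev_block m i * R + 1 \<in> S"
proof (rule ccontr)
  assume "prev_block m i * R + 1 \<notin> S"
  obtain x where x: "x \<in> inner R i" "x \<notin> S" using assms(5) by blast
  have "closed_nbhd E (i * R) \<inter> S = closed_nbhd E x \<inter> S"
    using assms \<open>prev_block m i * R + 1 \<notin> S\<close> x three_le_R
    by (auto simp: closed_nbhd_head closed_nbhd_inner block_eq_insert_inner)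
  moreover have "i * R \<in> {..<m * R}" "x \<in> {..<m * R}" "i * R \<noteq> x"
    using block_subset_vertices[OF i] inner_subset_block x three_le_R
    by (auto simp: block_eq_insert_inner inner_def)
  ultimately have "x \<in> S"
    using assms(3) by (intro locating_dominating_separates[OF LD])
  with x show False by blast
qed

lemma card_locating_dominating_lower:
  assumes LD: "locating_dominating {..<m * R} E S"
  shows "m * (3 * R - 7) \<le> 3 * card S"
proof -
  define c where "c i = card (S \<inter> inner R i)" for i
  define a :: "nat \<Rightarrow> nat" where "a i = of_bool (i * R \<in> S)" for i
  define b :: "nat \<Rightarrow> nat" where "b i = of_bool (i * R + 1 \<in> S)" for i
  define d :: "nat \<Rightarrow> nat" where
    "d i = of_bool (i * R \<notin> S \<and> i * R + 1 \<notin> S \<and> \<not> inner R i \<subseteq> S)" for i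
  have "S \<subseteq> {..<m * R}"
    using LD by (simp add: locating_dominating_def)
  then have card_S: "card S = (\<Sum>i<m. c i) + (\<Sum>i<m. a i) + (\<Sum>i<m. b i)"
    using three_le_R
    by (simp add: card_eq_sum_blocks[OF R_pos] card_block_Int sum.distrib c_def a_def b_def)
  have c_ge: "R - 3 \<le> c i" if "i < m" for i
    using card_Int_inner_ge[OF LD that] by (simp add: c_def)
  have block_ge: "R - 2 \<le> c i + a i + b i + d i" if "i < m" for i
  proof (cases "inner R i \<subseteq> S")
    case True
    then have "c i = R - 2" by (simp add: c_def Int_absorb1 inner_def)
    then show ?thesis by simp
  qed (use c_ge[OF that] in \<open>auto simp: a_def b_def d_def\<close>)
  have "d i \<le> a (next_block m i)" if "i < m" for i
    using next_head_in_locating_dominating[OF LD that] by (auto simp: a_def d_def)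
  then have "(\<Sum>i<m. d i) \<le> (\<Sum>i<m. a (next_block m i))"
    by (intro sum_mono) simp
  also have "\<dots> = (\<Sum>i<m. a i)"
    by (rule sum.reindex_bij_betw[OF bij_betw_next_block])
  finally have d_le_a: "(\<Sum>i<m. d i) \<le> (\<Sum>i<m. a i)" .
  have "d i \<le> b (prev_block m i)" if "i < m" for i
    using prev_tail_in_locating_dominating[OF LD that] by (auto simp: b_def d_def)
  then have "(\<Sum>i<m. d i) \<le> (\<Sum>i<m. b (prev_block m i))"
    by (intro sum_mono) simp
  also have "\<dots> = (\<Sum>i<m. b i)"
    by (rule sum.reindex_bij_betw[OF bij_betw_prev_block])
  finally have d_le_b: "(\<Sum>i<m. d i) \<le> (\<Sum>i<m. b i)" .
  have "m * (R - 3) \<le> (\<Sum>i<m. c i)"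
    using sum_mono[of "{..<m}" "\<lambda>_. R - 3" c] c_ge by simp
  moreover have "m * (R - 2) \<le> (\<Sum>i<m. c i) + (\<Sum>i<m. a i) + (\<Sum>i<m. b i) + (\<Sum>i<m. d i)"
    using sum_mono[of "{..<m}" "\<lambda>_. R - 2" "\<lambda>i. c i + a i + b i + d i"] block_ge
    by (simp add: sum.distrib)
  moreover have "m * (3 * R - 7) = m * (R - 3) + 2 * (m * (R - 2))"
    using three_le_R by (simp add: algebra_simps)
  ultimately show ?thesis
    using card_S d_le_a d_le_b by linarith
qed

lemma twice_card_locating_dominating_gt:
  assumes "5 \<le> R" "locating_dominating {..<m * R} E S"
  shows "m * R < 2 * card S"
proof -
  have "3 * (m * R) < 2 * (m * (3 * R - 7))"
    using assms(1) m_pos by simp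
  then show ?thesis
    using card_locating_dominating_lower[OF assms(2)] by linarith
qed

lemma gamma_LD_gt: "5 \<le> R \<Longrightarrow> m * R < 2 * gamma_LD {..<m * R} E"
  by (metis finite_lessThan gamma_LD_attained twice_card_locating_dominating_gt)

end

theorem proposition11:
  fixes r :: nat
  assumes "r \<ge> 4"
  shows "\<forall>N::nat. \<exists>V E. simple_graph V E \<and> card V \<ge> N \<and> connected_graph V E \<and>
           regular V E r \<and> has_closed_twins V E \<and>
           real (gamma_LD V E) > real (card V) / 2"
proof
  fix N :: nat
  interpret clique_ring_graph "N + 1" "r + 1"
    using assms by unfold_locales simp_all
  let ?V = "{..<(N + 1) * (r + 1)}"
  have "real (card ?V) < 2 * real (gamma_LD ?V (clique_ring (N + 1) (r + 1)))"
    using gamma_LD_gt assms by (simp flip: of_nat_mult)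
  then show "\<exists>V E. simple_graph V E \<and> card V \<ge> N \<and> connected_graph V E \<and>
           regular V E r \<and> has_closed_twins V E \<and> real (gamma_LD V E) > real (card V) / 2"
    using simple_graph_clique_ring connected_clique_ring regular_clique_ring
      has_closed_twins_clique_ring assms
    by (intro exI[of _ ?V] exI[of _ "clique_ring (N + 1) (r + 1)"]) simp
qed

end
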